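(* Let $\mathbf{A},\mathbf{B}\in\mathbb{C}$ be constants and let $\mathcal{U},\mathcal{V},\mathcal{W},\mathcal{H}$ be as in the context. Then the system $$\frac{d\vartheta_2}{d\tau}=\frac i\pi\Big\{\eta+\frac{\pi^2}{12}(\vartheta_3^4+\vartheta_4^4)\Big\}\vartheta_2,\quad\frac{d\vartheta_3}{d\tau}=\mathcal U,\quad\frac{d\vartheta_4}{d\tau}=\mathcal V,\quad\frac{d\eta}{d\tau}=\mathcal W$$ can be written (where $\mathcal H\ne0$) in the gradient form $$\frac{d}{d\tau}\begin{pmatrix}\vartheta_2\\\vartheta_3\\\vartheta_4\\\eta\end{pmatrix}=\Omega(\vartheta,\eta)\begin{pmatrix}\mathcal H_{\vartheta_2}\\\mathcal H_{\vartheta_3}\\\mathcal H_{\vartheta_4}\\\mathcal H_\eta\end{pmatrix},\qquad \Omega(\vartheta,\eta)=\frac{\vartheta_2}{4\mathcal H}\begin{pmatrix}0&\mathcal U&\mathcal V&\mathcal W\\-\mathcal U&0&0&0\\-\mathcal V&0&0&0\\-\mathcal W&0&0&0\end{pmatrix},$$ with Hamilton function $\mathcal H$; the corresponding Poisson bracket $\Omega$ is degenerate ($\det\Omega\equiv0$) but single-valued.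
   Context: $\mathcal U=\frac i\pi\{\eta+\frac{\pi^2}{12}(\vartheta_3^4+\vartheta_4^4-3\mathbf B^4\vartheta_4^4)\}\vartheta_3$, $\mathcal V=\frac i\pi\{\eta+\frac{\pi^2}{12}(\vartheta_3^4+\vartheta_4^4-3\mathbf A^4\vartheta_3^4)\}\vartheta_4$, $\mathcal W=\frac i\pi2\eta^2-\frac{\pi^3}{72}i\{\vartheta_3^8+(9\mathbf A^4\mathbf B^4-6\mathbf A^4-6\mathbf B^4+2)\vartheta_3^4\vartheta_4^4+\vartheta_4^8\}$, and $\mathcal H(\vartheta_2,\vartheta_3,\vartheta_4,\eta)=\mathbf A^4\frac{\vartheta_3^4}{\vartheta_2^4}-\mathbf B^4\frac{\vartheta_4^4}{\vartheta_2^4}$. Subscripts on $\mathcal H$ denote partial derivatives. *)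

theory Defs
  imports Complex_Main "HOL-Analysis.Derivative" "Jordan_Normal_Form.Determinant"
begin

text \<open>Right-hand sides of the system; the variables are
  t2 = theta_2, t3 = theta_3, t4 = theta_4, e = eta; A, B are the constants.\<close>

definition F2 :: "complex \<Rightarrow> complex \<Rightarrow> complex \<Rightarrow> complex \<Rightarrow> complex" where
  "F2 t2 t3 t4 e = (\<i> / of_real pi) * (e + (of_real pi)^2 / 12 * (t3^4 + t4^4)) * t2"

definition Ucal :: "complex \<Rightarrow> complex \<Rightarrow> complex \<Rightarrow> complex \<Rightarrow> complex \<Rightarrow> complex" where
  "Ucal A B t3 t4 e = (\<i> / of_real pi) *
     (e + (of_real pi)^2 / 12 * (t3^4 + t4^4 - 3 * B^4 * t4^4)) * t3"

definition Vcal :: "complex \<Rightarrow> complex \<Rightarrow> complex \<Rightarrow> complex \<Rightarrow> complex \<Rightarrow> complex" where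
  "Vcal A B t3 t4 e = (\<i> / of_real pi) *
     (e + (of_real pi)^2 / 12 * (t3^4 + t4^4 - 3 * A^4 * t3^4)) * t4"

definition Wcal :: "complex \<Rightarrow> complex \<Rightarrow> complex \<Rightarrow> complex \<Rightarrow> complex \<Rightarrow> complex" where
  "Wcal A B t3 t4 e = (\<i> / of_real pi) * 2 * e^2
     - (of_real pi)^3 / 72 * \<i> *
       (t3^8 + (9 * A^4 * B^4 - 6 * A^4 - 6 * B^4 + 2) * t3^4 * t4^4 + t4^8)"

definition Hcal :: "complex \<Rightarrow> complex \<Rightarrow> complex \<Rightarrow> complex \<Rightarrow> complex \<Rightarrow> complex \<Rightarrow> complex" where
  "Hcal A B t2 t3 t4 e = A^4 * t3^4 / t2^4 - B^4 * t4^4 / t2^4"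

definition gradH :: "complex \<Rightarrow> complex \<Rightarrow> complex \<Rightarrow> complex \<Rightarrow> complex \<Rightarrow> complex \<Rightarrow> complex vec" where
  "gradH A B t2 t3 t4 e = vec_of_list
     [deriv (\<lambda>x. Hcal A B x t3 t4 e) t2,
      deriv (\<lambda>x. Hcal A B t2 x t4 e) t3,
      deriv (\<lambda>x. Hcal A B t2 t3 x e) t4,
      deriv (\<lambda>x. Hcal A B t2 t3 t4 x) e]"

definition Omega :: "complex \<Rightarrow> complex \<Rightarrow> complex \<Rightarrow> complex \<Rightarrow> complex \<Rightarrow> complex \<Rightarrow> complex mat" where
  "Omega A B t2 t3 t4 e =
     (let U = Ucal A B t3 t4 e; V = Vcal A B t3 t4 e; W = Wcal A B t3 t4 e;
          c = t2 / (4 * Hcal A B t2 t3 t4 e)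
      in c \<cdot>\<^sub>m mat_of_rows_list 4
           [[0, U, V, W], [-U, 0, 0, 0], [-V, 0, 0, 0], [-W, 0, 0, 0]])"

definition sysField :: "complex \<Rightarrow> complex \<Rightarrow> complex \<Rightarrow> complex \<Rightarrow> complex \<Rightarrow> complex \<Rightarrow> complex vec" where
  "sysField A B t2 t3 t4 e = vec_of_list
     [F2 t2 t3 t4 e, Ucal A B t3 t4 e, Vcal A B t3 t4 e, Wcal A B t3 t4 e]"

end

theory Submission
  imports Defs
begin

text \<open>Hcal is homogeneous of degree -4 in t2 and does not depend on e, so Euler's relation
  t2 * dHcal/dt2 = -4 * Hcal turns the last three rows of Omega * gradH into Ucal, Vcal, Wcal.
  The first row is t2 * (Ucal * dHcal/dt3 + Vcal * dHcal/dt4) / (4 * Hcal); it equals F2 because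
  the correction terms -3 B^4 t4^4 in Ucal and -3 A^4 t3^4 in Vcal contribute the same multiple
  of A^4 B^4 t3^4 t4^4 and cancel. Finally, Omega is a multiple of a skew-symmetric arrowhead
  matrix, and such a matrix has a nontrivial kernel.\<close>

lemma mat_of_rows_list_mult_vec_of_list:
  assumes "length xs = n" and "\<forall>r \<in> set rs. length r = n"
  shows "mat_of_rows_list n rs *\<^sub>v vec_of_list xs
    = vec_of_list (map (\<lambda>r. sum_list (map2 (*) r xs)) rs)"
  using assms
  by (intro eq_vecI)
    (auto simp: mat_of_rows_list_def scalar_prod_def sum_list_sum_nth index_vec_of_list
      atLeast0LessThan simp del: vec_of_list_Cons)

lemma smult_mat_of_rows_list:
  assumes "\<forall>r \<in> set rs. length r = n"
  shows "c \<cdot>\<^sub>m mat_of_rows_list n rs = mat_of_rows_list n (map (map ((*) c)) rs)"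
  using assms by (intro eq_matI) (auto simp: mat_of_rows_list_def)

lemma vec_of_list_eq_iff: "vec_of_list xs = vec_of_list ys \<longleftrightarrow> xs = ys"
  by (metis list_vec)

lemma vec_of_list_carrier: "vec_of_list xs \<in> carrier_vec (length xs)"
  by (rule carrier_vecI) (rule dim_vec_of_list)

lemma zero_vec_4: "0\<^sub>v 4 = vec_of_list [0, 0, 0, 0]"
  by (rule eq_vecI) (simp_all add: index_vec_of_list nth_Cons' del: vec_of_list_Cons)

definition skew_arrowhead_mat :: "'a::ring_1 \<Rightarrow> 'a \<Rightarrow> 'a \<Rightarrow> 'a mat" where
  "skew_arrowhead_mat U V W =
     mat_of_rows_list 4 [[0, U, V, W], [-U, 0, 0, 0], [-V, 0, 0, 0], [-W, 0, 0, 0]]"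

lemma skew_arrowhead_mat_carrier: "skew_arrowhead_mat U V W \<in> carrier_mat 4 4"
  unfolding skew_arrowhead_mat_def mat_of_rows_list_def by (rule carrier_matI) simp_all

lemma smult_skew_arrowhead_mat:
  "c \<cdot>\<^sub>m skew_arrowhead_mat U V W = skew_arrowhead_mat (c * U) (c * V) (c * W)"
  unfolding skew_arrowhead_mat_def by (subst smult_mat_of_rows_list) simp_all

lemma skew_arrowhead_mat_mult_vec:
  "skew_arrowhead_mat U V W *\<^sub>v vec_of_list [x0, x1, x2, x3]
     = vec_of_list [U * x1 + V * x2 + W * x3, - (U * x0), - (V * x0), - (W * x0)]"
  by (simp add: skew_arrowhead_mat_def mat_of_rows_list_mult_vec_of_list add.assoc
      del: vec_of_list_Cons)

lemma det_skew_arrowhead_mat: "det (skew_arrowhead_mat U V W :: 'a::field mat) = 0"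
proof -
  have "\<exists>xs. length xs = 4 \<and> xs \<noteq> [0, 0, 0, 0] \<and>
      skew_arrowhead_mat U V W *\<^sub>v vec_of_list xs = vec_of_list [0, 0, 0, 0]"
  proof (cases "U = 0")
    case True
    have "skew_arrowhead_mat U V W *\<^sub>v vec_of_list [0, 1, 0, 0] = vec_of_list [0, 0, 0, 0]"
      unfolding skew_arrowhead_mat_mult_vec vec_of_list_eq_iff using True by simp
    then show ?thesis
      by (intro exI[of _ "[0, 1, 0, 0]"]) simp
  next
    case False
    have "skew_arrowhead_mat U V W *\<^sub>v vec_of_list [0, V, -U, 0] = vec_of_list [0, 0, 0, 0]"
      unfolding skew_arrowhead_mat_mult_vec vec_of_list_eq_iff by (simp add: mult.commute)
    then show ?thesis
      using False by (intro exI[of _ "[0, V, -U, 0]"]) simp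
  qed
  then show ?thesis
    unfolding det_0_iff_vec_prod_zero_field[OF skew_arrowhead_mat_carrier] zero_vec_4
    by (metis vec_of_list_carrier vec_of_list_eq_iff)
qed

lemma Omega_eq_skew_arrowhead_mat:
  "Omega A B t2 t3 t4 e =
     (let c = t2 / (4 * Hcal A B t2 t3 t4 e)
      in skew_arrowhead_mat (c * Ucal A B t3 t4 e) (c * Vcal A B t3 t4 e) (c * Wcal A B t3 t4 e))"
  unfolding Omega_def Let_def skew_arrowhead_mat_def[symmetric] by (rule smult_skew_arrowhead_mat)

lemma deriv_Hcal_theta2:
  assumes "t2 \<noteq> 0"
  shows "deriv (\<lambda>x. Hcal A B x t3 t4 e) t2 = -4 * Hcal A B t2 t3 t4 e / t2"
  unfolding Hcal_def using assms
  by (intro DERIV_imp_deriv) (auto intro!: derivative_eq_intros simp: field_simps eval_nat_numeral)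

lemma deriv_Hcal_theta3:
  assumes "t2 \<noteq> 0"
  shows "deriv (\<lambda>x. Hcal A B t2 x t4 e) t3 = 4 * A^4 * t3^3 / t2^4"
  unfolding Hcal_def using assms
  by (intro DERIV_imp_deriv) (auto intro!: derivative_eq_intros simp: field_simps eval_nat_numeral)

lemma deriv_Hcal_theta4:
  assumes "t2 \<noteq> 0"
  shows "deriv (\<lambda>x. Hcal A B t2 t3 x e) t4 = -4 * B^4 * t4^3 / t2^4"
  unfolding Hcal_def using assms
  by (intro DERIV_imp_deriv) (auto intro!: derivative_eq_intros simp: field_simps eval_nat_numeral)

lemma deriv_Hcal_eta: "deriv (\<lambda>x. Hcal A B t2 t3 t4 x) e = 0"
  by (simp add: Hcal_def)

lemma gradH_eq:
  assumes "t2 \<noteq> 0"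
  shows "gradH A B t2 t3 t4 e = vec_of_list
    [-4 * Hcal A B t2 t3 t4 e / t2, 4 * A^4 * t3^3 / t2^4, -4 * B^4 * t4^3 / t2^4, 0]"
  using assms
  by (simp add: gradH_def deriv_Hcal_theta2 deriv_Hcal_theta3 deriv_Hcal_theta4 deriv_Hcal_eta
      del: vec_of_list_Cons)

lemma F2_mult_eq_Ucal_Vcal:
  "(A^4 * t3^4 - B^4 * t4^4) * F2 t2 t3 t4 e
     = t2 * (A^4 * t3^3 * Ucal A B t3 t4 e - B^4 * t4^3 * Vcal A B t3 t4 e)"
  unfolding F2_def Ucal_def Vcal_def by (simp add: algebra_simps eval_nat_numeral)

lemma Hcal_nonzero_imp_theta2_nonzero:
  assumes "Hcal A B t2 t3 t4 e \<noteq> 0"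
  shows "t2 \<noteq> 0" \<comment> \<open>division by zero yields zero\<close>
  using assms by (auto simp: Hcal_def)

lemma F2_eq_Hamiltonian_first_row:
  assumes "Hcal A B t2 t3 t4 e \<noteq> 0"
  shows "F2 t2 t3 t4 e = t2 / (4 * Hcal A B t2 t3 t4 e) *
    (Ucal A B t3 t4 e * (4 * A^4 * t3^3 / t2^4) + Vcal A B t3 t4 e * (-4 * B^4 * t4^3 / t2^4))"
proof -
  have t2: "t2 \<noteq> 0"
    using assms by (rule Hcal_nonzero_imp_theta2_nonzero)
  have numerator: "A^4 * t3^4 - B^4 * t4^4 = Hcal A B t2 t3 t4 e * t2^4"
    using t2 by (simp add: Hcal_def field_simps)
  have "F2 t2 t3 t4 e = t2 * (A^4 * t3^3 * Ucal A B t3 t4 e - B^4 * t4^3 * Vcal A B t3 t4 e)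
      / (Hcal A B t2 t3 t4 e * t2^4)"
    using F2_mult_eq_Ucal_Vcal[of A t3 B t4 t2 e, unfolded numerator] assms t2
    by (simp add: eq_divide_eq mult.commute)
  also have "\<dots> = t2 / (4 * Hcal A B t2 t3 t4 e) *
      (Ucal A B t3 t4 e * (4 * A^4 * t3^3 / t2^4) + Vcal A B t3 t4 e * (-4 * B^4 * t4^3 / t2^4))"
    using assms t2 by (simp add: field_simps eval_nat_numeral)
  finally show ?thesis .
qed

theorem theorem9p7:
  fixes A B t2 t3 t4 e :: complex
  assumes "Hcal A B t2 t3 t4 e \<noteq> 0"
  shows "sysField A B t2 t3 t4 e = Omega A B t2 t3 t4 e *\<^sub>v gradH A B t2 t3 t4 e
         \<and> det (Omega A B t2 t3 t4 e) = 0"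
proof
  have t2: "t2 \<noteq> 0"
    using assms by (rule Hcal_nonzero_imp_theta2_nonzero)
  define H c U V W where "H = Hcal A B t2 t3 t4 e" and "c = t2 / (4 * H)"
    and "U = Ucal A B t3 t4 e" and "V = Vcal A B t3 t4 e" and "W = Wcal A B t3 t4 e"
  have Euler: "- (c * X * (-4 * H / t2)) = X" for X
    using assms t2 by (simp add: c_def H_def)
  have "Omega A B t2 t3 t4 e *\<^sub>v gradH A B t2 t3 t4 e = vec_of_list
      [c * U * (4 * A^4 * t3^3 / t2^4) + c * V * (-4 * B^4 * t4^3 / t2^4) + c * W * 0,
       - (c * U * (-4 * H / t2)), - (c * V * (-4 * H / t2)), - (c * W * (-4 * H / t2))]"
    by (simp add: Omega_eq_skew_arrowhead_mat gradH_eq[OF t2] skew_arrowhead_mat_mult_vec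
        H_def c_def U_def V_def W_def del: vec_of_list_Cons)
  also have "\<dots> = vec_of_list
      [c * (U * (4 * A^4 * t3^3 / t2^4) + V * (-4 * B^4 * t4^3 / t2^4)), U, V, W]"
    unfolding Euler by (simp add: algebra_simps del: vec_of_list_Cons)
  also have "\<dots> = sysField A B t2 t3 t4 e"
    unfolding sysField_def F2_eq_Hamiltonian_first_row[OF assms] H_def c_def U_def V_def W_def ..
  finally show "sysField A B t2 t3 t4 e = Omega A B t2 t3 t4 e *\<^sub>v gradH A B t2 t3 t4 e" ..
  show "det (Omega A B t2 t3 t4 e) = 0"
    by (simp add: Omega_eq_skew_arrowhead_mat Let_def det_skew_arrowhead_mat)
qed

end
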